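(* Let $\alpha>-1$ and for $i=1,2,3,\ldots$ define the polynomials $$a_i(x)=\frac{1}{i!}\sum_{j=1}^i(-1)^{i+j+1}\binom{\alpha+1}{j-1}\binom{\alpha+2}{i-j}(\alpha+3)_{i-j}\,x^j .$$ Then for every real $x$, $$\sum_{i=1}^{\infty}a_i(x)=-\frac{\sin\pi\alpha}{\pi}\,\frac{x}{(\alpha+2)(\alpha+3)}\;{}_1F_1\!\left(\begin{matrix}1\\ \alpha+4\end{matrix};-x\right).$$ Moreover, if $\alpha\in\{0,1,2,\ldots\}$, then for every $k=1,2,3,\ldots$ $$\sum_{i=k}^{\infty}\binom{i}{k}a_i(x)=(-1)^{\alpha+k}a_k(-x);$$ in particular, for such $\alpha$, $\sum_{i=1}^\infty a_i(x)=0$ and $\sum_{i=1}^\infty i\,a_i(x)=(-1)^{\alpha+1}x$.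
   Context: $(a)_0=1$, $(a)_k=a(a+1)\cdots(a+k-1)$ is the Pochhammer symbol; $\binom{\gamma}{m}=\frac{\gamma(\gamma-1)\cdots(\gamma-m+1)}{m!}$ denotes the generalized binomial coefficient for real $\gamma$ and nonnegative integer $m$. ${}_pF_q$ denotes the generalized hypergeometric series $\sum_{k\ge0}\frac{(a_1)_k\cdots(a_p)_k}{(b_1)_k\cdots(b_q)_k}\frac{z^k}{k!}$. (These $a_i$ are the coefficients of the infinite-order differential equation $M\sum_{i\ge0}a_i(x)y^{(i)}(x)+xy''(x)+(\alpha+1-x)y'(x)+ny(x)=0$ satisfied by Koornwinder's generalized Laguerre polynomials orthogonal w.r.t. $\frac{1}{\Gamma(\alpha+1)}x^\alpha e^{-x}+M\delta(x)$.) *)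

theory Defs
  imports "HOL-Analysis.Analysis"
begin

text \<open>The coefficients a_i(x) (for i >= 1; the empty sum gives a_0 = 0, unused).\<close>
definition koorn_a :: "real \<Rightarrow> nat \<Rightarrow> real \<Rightarrow> real" where
  "koorn_a \<alpha> i x = (1 / fact i) *
     (\<Sum>j=1..i. (-1) ^ (i + j + 1) * ((\<alpha> + 1) gchoose (j - 1)) * ((\<alpha> + 2) gchoose (i - j))
                 * pochhammer (\<alpha> + 3) (i - j) * x ^ j)"

definition hyp1F1 :: "real \<Rightarrow> real \<Rightarrow> real \<Rightarrow> real" where
  "hyp1F1 a b z = (\<Sum>k. pochhammer a k / pochhammer b k * z ^ k / fact k)"

end

theory Submission
  imports Defs "HOL-Computational_Algebra.Formal_Power_Series"
begin

text \<open>
  Put \<open>c(l) = (-1)^l (\<alpha>+2 gchoose l) (\<alpha>+3)\<^sub>l\<close>, so that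
  \<open>a\<^sub>i(x) = -(1/i!) \<Sum>\<^sub>j (\<alpha>+1 gchoose j-1) c(i-j) x^j\<close>, and \<open>U(j) = \<Sum>\<^sub>l c(l) / (j+l)!\<close>.
  Summing \<open>a\<^sub>i(x)\<close> over \<open>i\<close> and exchanging the order of summation (Tannery's theorem) gives
  \<open>-\<Sum>\<^sub>k (\<alpha>+1 gchoose k) x^(k+1) U(k+1)\<close>. As \<open>c(l+1)/c(l)\<close> is rational in \<open>l\<close>, the partial sums of
  \<open>j U(j) - (j+\<alpha>+3)(j-\<alpha>-2) U(j+1)\<close> telescope to \<open>-n c(n)/(j+n)!\<close>. Since
  \<open>n c(n)/n! \<longrightarrow> -sin(\<pi>\<alpha>)/\<pi>\<close>, the case \<open>j = 0\<close> evaluates \<open>U(1)\<close> and the cases \<open>j \<ge> 1\<close> give a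
  first-order recurrence, whence \<open>(\<alpha>+1 gchoose k) U(k+1) = (-1)^k sin(\<pi>\<alpha>) / (\<pi> (\<alpha>+2)\<^sub>k\<^sub>+\<^sub>2)\<close>:
  these are the coefficients of the \<open>\<^sub>1F\<^sub>1\<close> series.

  For \<open>\<alpha> = m \<in> \<nat>\<close> all sums are finite, because \<open>c(l) = 0\<close> for \<open>l > m + 2\<close>. In the binomially
  weighted sum the coefficient of \<open>x^(q+1)\<close> is either a Chu-Vandermonde sum, which reproduces the
  coefficient of \<open>(-1)^(m+k) a\<^sub>k(-x)\<close>, or a value \<open>U(e)\<close> with \<open>1 \<le> e \<le> m + 2\<close>, which vanishes by
  the formula above since \<open>sin(\<pi>m) = 0\<close>.
\<close>

lemma rGamma_reflection_real: "rGamma (x :: real) * rGamma (1 - x) = sin (pi * x) / pi"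
proof -
  have "complex_of_real (rGamma x * rGamma (1 - x)) = rGamma (of_real x) * rGamma (1 - of_real x)"
    by (simp add: rGamma_complex_of_real[symmetric])
  also have "\<dots> = complex_of_real (sin (pi * x) / pi)"
    by (simp add: rGamma_reflection_complex sin_of_real[symmetric])
  finally show ?thesis
    by (simp only: of_real_eq_iff)
qed

lemma gbinomial_of_nat_eq_0: "n < k \<Longrightarrow> (of_nat n :: 'a :: field_char_0) gchoose k = 0"
  by (simp add: binomial_gbinomial[symmetric] binomial_eq_0)

lemma abs_gbinomial_le: "\<bar>(a :: real) gchoose k\<bar> \<le> (\<bar>a\<bar> + 1) ^ k"
proof (induction k)
  case (Suc k)
  have "real (Suc k) * (a gchoose Suc k) = (a - real k) * (a gchoose k)"
    using gbinomial_mult_1[of a k] by (simp add: algebra_simps)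
  then have "real (Suc k) * \<bar>a gchoose Suc k\<bar> = \<bar>a - real k\<bar> * \<bar>a gchoose k\<bar>"
    by (metis abs_mult abs_of_nat)
  also have "\<dots> \<le> ((\<bar>a\<bar> + 1) * real (Suc k)) * (\<bar>a\<bar> + 1) ^ k"
  proof (rule mult_mono)
    have "(\<bar>a\<bar> + 1) * real (Suc k) = \<bar>a\<bar> + real k + 1 + \<bar>a\<bar> * real k"
      by (simp add: algebra_simps)
    moreover have "0 \<le> \<bar>a\<bar> * real k"
      by simp
    ultimately show "\<bar>a - real k\<bar> \<le> (\<bar>a\<bar> + 1) * real (Suc k)"
      using abs_triangle_ineq4[of a "real k"] by linarith
  qed (use Suc.IH in auto)
  also have "\<dots> = real (Suc k) * (\<bar>a\<bar> + 1) ^ Suc k"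
    by (simp only: power_Suc mult_ac)
  finally show ?case
    by (rule mult_left_le_imp_le) simp
qed simp

lemma fact_mult_le_fact_add: "fact m * fact n \<le> (fact (m + n) :: real)"
proof -
  have "fact m * fact n \<le> (fact (m + n) :: nat)"
    by (rule dvd_imp_le[OF fact_fact_dvd_fact]) simp
  then show ?thesis
    by (metis of_nat_fact of_nat_le_iff of_nat_mult)
qed

lemma pochhammer_mono:
  fixes a b :: "'a :: linordered_semidom"
  assumes "0 < a" "a \<le> b"
  shows "pochhammer a k \<le> pochhammer b k"
proof (induction k)
  case (Suc k)
  have "0 \<le> pochhammer a k"
    using assms(1) by (rule pochhammer_nonneg)
  then show ?case
    using Suc.IH assms unfolding pochhammer_Suc by (intro mult_mono) auto
qed simp

lemma summable_hyp1F1_one: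
  assumes "b \<ge> 1"
  shows "summable (\<lambda>k. pochhammer 1 k / pochhammer b k * (z :: real) ^ k / fact k)"
proof (rule summable_comparison_test'[OF summable_exp[of "\<bar>z\<bar>"]])
  fix k
  have "pochhammer 1 k \<le> pochhammer b k" "0 < pochhammer (1 :: real) k" "0 < pochhammer b k"
    using assms pochhammer_mono[of 1 b k] pochhammer_pos[of "1 :: real" k] pochhammer_pos[of b k] by auto
  then have "norm (pochhammer 1 k / pochhammer b k * z ^ k / fact k)
      = pochhammer 1 k / pochhammer b k * (inverse (fact k) * \<bar>z\<bar> ^ k)"
    by (simp add: abs_mult power_abs divide_inverse)
  also have "\<dots> \<le> 1 * (inverse (fact k) * \<bar>z\<bar> ^ k)"
    using \<open>pochhammer 1 k \<le> pochhammer b k\<close> \<open>0 < pochhammer b k\<close> by (intro mult_right_mono) auto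
  finally show "norm (pochhammer 1 k / pochhammer b k * z ^ k / fact k) \<le> inverse (fact k) * \<bar>z\<bar> ^ k"
    by simp
qed

lemma sums_diagonal_Tannery:
  fixes G :: "nat \<Rightarrow> nat \<Rightarrow> 'a :: {real_normed_algebra, banach}"
  assumes sums: "\<And>k. G k sums b k"
    and bound: "\<And>k n. norm (\<Sum>l<n. G k l) \<le> M k"
    and "summable M"
  shows "(\<lambda>i. \<Sum>k\<le>i. G k (i - k)) sums (\<Sum>k. b k)"
proof -
  define a where "a k n = (\<Sum>l<n - k. G k l)" for k n
  have "(\<lambda>n. a k n) \<longlonglongrightarrow> b k" for k
  proof (rule LIMSEQ_offset[of _ k])
    show "(\<lambda>n. a k (n + k)) \<longlonglongrightarrow> b k"
      using sums[of k] by (simp add: a_def sums_def)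
  qed
  moreover have "\<forall>\<^sub>F (k, n) in at_top \<times>\<^sub>F sequentially. norm (a k n) \<le> M k"
    by (intro always_eventually) (auto simp: a_def bound)
  ultimately have "(\<lambda>n. \<Sum>k. a k n) \<longlonglongrightarrow> (\<Sum>k. b k)"
    using tannerys_theorem[of a b sequentially M] \<open>summable M\<close> by simp
  moreover have "(\<Sum>k. a k n) = (\<Sum>i<n. \<Sum>k\<le>i. G k (i - k))" for n
  proof -
    have "(\<Sum>k. a k n) = (\<Sum>k<n. \<Sum>l<n - k. G k l)"
      by (subst suminf_finite[of "{..<n}"]) (auto simp: a_def)
    also have "\<dots> = (\<Sum>(k, l) \<in> {(k, l). k + l < n}. G k l)"
      by (subst sum.Sigma) (auto intro!: sum.cong)
    also have "\<dots> = (\<Sum>i<n. \<Sum>k\<le>i. G k (i - k))"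
      by (rule sum.triangle_reindex)
    finally show ?thesis .
  qed
  ultimately show ?thesis
    by (simp add: sums_def)
qed

definition koorn_c :: "real \<Rightarrow> nat \<Rightarrow> real" where
  "koorn_c \<alpha> l = (-1) ^ l * ((\<alpha> + 2) gchoose l) * pochhammer (\<alpha> + 3) l"

lemma koorn_c_0 [simp]: "koorn_c \<alpha> 0 = 1"
  by (simp add: koorn_c_def)

lemma koorn_c_pochhammer: "koorn_c \<alpha> l = pochhammer (- \<alpha> - 2) l * pochhammer (\<alpha> + 3) l / fact l"
  by (simp add: koorn_c_def gbinomial_pochhammer power_mult_distrib[symmetric])

lemma koorn_c_Suc:
  "real (Suc l) * koorn_c \<alpha> (Suc l) = (real l - \<alpha> - 2) * (real l + \<alpha> + 3) * koorn_c \<alpha> l"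
  unfolding koorn_c_pochhammer by (simp add: pochhammer_Suc divide_simps) (simp add: algebra_simps)

lemma koorn_a_conv_koorn_c:
  "koorn_a \<alpha> i x = - (\<Sum>j=1..i. ((\<alpha> + 1) gchoose (j - 1)) * koorn_c \<alpha> (i - j) * x ^ j) / fact i"
proof -
  have "(-1::real) ^ (i + j + 1) = - ((-1) ^ (i - j))" if "j \<le> i" for j
  proof -
    obtain t where "i = j + t" using \<open>j \<le> i\<close> le_Suc_ex by blast
    then show ?thesis by (simp add: power_add power_mult_distrib[symmetric])
  qed
  then show ?thesis
    unfolding koorn_a_def koorn_c_def
    by (auto simp: sum_negf[symmetric] intro!: sum.cong)
qed

text \<open>\<open>(-1)^n (\<alpha>+2 gchoose n) \<sim> n^(-\<alpha>-3) / \<Gamma>(-\<alpha>-2)\<close> and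
  \<open>pochhammer (\<alpha>+3) n / n! \<sim> n^(\<alpha>+2) / \<Gamma>(\<alpha>+3)\<close>; Euler's reflection formula turns the product
  of the two reciprocal Gamma values into a sine.\<close>
lemma koorn_c_asymptotics: "(\<lambda>n. real n * koorn_c \<alpha> n / fact n) \<longlonglongrightarrow> - sin (pi * \<alpha>) / pi"
proof -
  let ?A = "\<lambda>n. ((\<alpha> + 2) gchoose n) / ((-1) ^ n / exp ((\<alpha> + 2 + 1) * of_real (ln (real n))))"
  let ?B = "\<lambda>n. ((\<alpha> + 2 + real n) gchoose n) * exp (- (\<alpha> + 2) * of_real (ln (real n)))"
  have "?A \<longlonglongrightarrow> inverse (Gamma (- (\<alpha> + 2)))"
    by (rule gbinomial_asymptotic)
  moreover have "?B \<longlonglongrightarrow> rGamma (\<alpha> + 2 + 1)"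
    by (rule Gamma_gbinomial)
  ultimately have "(\<lambda>n. ?A n * ?B n) \<longlonglongrightarrow> inverse (Gamma (- (\<alpha> + 2))) * rGamma (\<alpha> + 2 + 1)"
    by (rule tendsto_mult)
  also have "inverse (Gamma (- (\<alpha> + 2))) * rGamma (\<alpha> + 2 + 1) = rGamma (\<alpha> + 3) * rGamma (1 - (\<alpha> + 3))"
    by (simp add: rGamma_inverse_Gamma algebra_simps)
  also have "\<dots> = sin (pi * \<alpha> + pi + pi + pi) / pi"
    using rGamma_reflection_real[of "\<alpha> + 3"] by (simp add: algebra_simps)
  also have "\<dots> = - sin (pi * \<alpha>) / pi"
    by (simp only: sin_periodic_pi minus_minus)
  finally have lim: "(\<lambda>n. ?A n * ?B n) \<longlonglongrightarrow> - sin (pi * \<alpha>) / pi" .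
  have "?A n * ?B n = real n * koorn_c \<alpha> n / fact n" if "n > 0" for n
  proof -
    have "exp ((\<alpha> + 2 + 1) * ln (real n)) * exp (- (\<alpha> + 2) * ln (real n)) = real n"
      using that by (simp add: exp_add[symmetric] algebra_simps)
    moreover have "((\<alpha> + 2 + real n) gchoose n) = pochhammer (\<alpha> + 3) n / fact n"
      by (simp add: gbinomial_pochhammer' add_ac)
    moreover have "1 / (-1::real) ^ n = (-1) ^ n"
      by (simp add: power_one_over[symmetric])
    ultimately show ?thesis
      unfolding koorn_c_def by (simp add: field_simps)
  qed
  then show ?thesis
    by (rule Lim_transform_eventually[OF lim eventually_mono[OF eventually_gt_at_top[of 0]]])
qed

lemma koorn_c_bound: "\<exists>K>0. \<forall>l. \<bar>koorn_c \<alpha> l\<bar> / fact l \<le> K / (real l + 1)"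
proof -
  have "Bseq (\<lambda>n. real n * koorn_c \<alpha> n / fact n)"
    using koorn_c_asymptotics by (blast intro: convergent_imp_Bseq convergentI)
  then obtain K where K: "K > 0" "\<And>n. \<bar>real n * koorn_c \<alpha> n / fact n\<bar> \<le> K"
    by (auto simp: Bseq_def)
  have "\<bar>koorn_c \<alpha> l\<bar> / fact l \<le> (1 + 2 * K) / (real l + 1)" for l
  proof (cases "l = 0")
    case False
    then have "1 \<le> real l"
      by simp
    then have "K \<le> K * real l"
      using K(1) by simp
    have "\<bar>koorn_c \<alpha> l\<bar> / fact l \<le> K / real l"
      using K(2)[of l] \<open>1 \<le> real l\<close> by (simp add: field_simps abs_mult)
    also have "\<dots> \<le> (1 + 2 * K) / (real l + 1)"
      using \<open>1 \<le> real l\<close> \<open>K \<le> K * real l\<close> by (simp add: field_simps)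
    finally show ?thesis .
  qed (use K in simp)
  then show ?thesis
    using K(1) by (intro exI[of _ "1 + 2 * K"]) auto
qed

lemma koorn_c_telescope:
  "(\<Sum>l<n. real j * koorn_c \<alpha> l / fact (j + l)
          - (real j + \<alpha> + 3) * (real j - \<alpha> - 2) * koorn_c \<alpha> l / fact (j + 1 + l))
   = - real n * koorn_c \<alpha> n / fact (j + n)"
proof -
  define f where "f l = - real l * koorn_c \<alpha> l / fact (j + l)" for l
  have "real j * koorn_c \<alpha> l / fact (j + l)
          - (real j + \<alpha> + 3) * (real j - \<alpha> - 2) * koorn_c \<alpha> l / fact (j + 1 + l)
        = f (Suc l) - f l" for l
  proof -
    define F where "F = (fact (j + l) :: real)"
    define G where "G = real j + real l + 1"
    have "fact (j + Suc l) = G * F" "fact (j + 1 + l) = G * F"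
      by (simp_all add: F_def G_def algebra_simps)
    moreover have "F \<noteq> 0" "G \<noteq> 0"
      by (simp_all add: F_def G_def)
    ultimately show ?thesis
      unfolding f_def mult_minus_left koorn_c_Suc F_def[symmetric]
      by (simp add: field_simps) (simp add: G_def algebra_simps)
  qed
  then have "(\<Sum>l<n. real j * koorn_c \<alpha> l / fact (j + l)
          - (real j + \<alpha> + 3) * (real j - \<alpha> - 2) * koorn_c \<alpha> l / fact (j + 1 + l))
        = (\<Sum>l<n. f (Suc l) - f l)"
    by (simp only:)
  also have "\<dots> = f n - f 0"
    by (rule sum_lessThan_telescope)
  finally show ?thesis
    by (simp add: f_def)
qed

definition koorn_U :: "real \<Rightarrow> nat \<Rightarrow> real" where
  "koorn_U \<alpha> j = (\<Sum>l. koorn_c \<alpha> l / fact (j + l))"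

lemma summable_abs_koorn_U:
  assumes "j \<ge> 1"
  shows "summable (\<lambda>l. \<bar>koorn_c \<alpha> l\<bar> / fact (j + l))"
proof -
  obtain K where K: "\<And>l. \<bar>koorn_c \<alpha> l\<bar> / fact l \<le> K / (real l + 1)"
    using koorn_c_bound by blast
  have bound: "\<bar>koorn_c \<alpha> l\<bar> / fact (j + l) \<le> K * inverse (real (Suc l) ^ 2)" for l
  proof -
    have "fact (Suc l) \<le> (fact (j + l) :: real)"
      using assms by (intro fact_mono) simp
    then have "\<bar>koorn_c \<alpha> l\<bar> / fact (j + l) \<le> \<bar>koorn_c \<alpha> l\<bar> / fact (Suc l)"
      by (intro divide_left_mono) auto
    also have "\<dots> = (\<bar>koorn_c \<alpha> l\<bar> / fact l) / (real l + 1)"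
      by (simp add: field_simps)
    also have "\<dots> \<le> K / (real l + 1) / (real l + 1)"
      using K[of l] by (intro divide_right_mono) auto
    finally show ?thesis
      by (simp add: field_simps power2_eq_square)
  qed
  have "summable (\<lambda>l. inverse (real l ^ 2))"
    by (rule inverse_power_summable) simp
  then have "summable (\<lambda>l. K * inverse (real (Suc l) ^ 2))"
    by (subst (asm) summable_Suc_iff[symmetric]) (rule summable_mult)
  then show ?thesis
    by (rule summable_comparison_test') (use bound in simp)
qed

lemma koorn_U_sums:
  assumes "j \<ge> 1"
  shows "(\<lambda>l. koorn_c \<alpha> l / fact (j + l)) sums koorn_U \<alpha> j"
proof -
  have "summable (\<lambda>l. \<bar>koorn_c \<alpha> l / fact (j + l)\<bar>)"
    using summable_abs_koorn_U[OF assms] by simp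
  then show ?thesis
    unfolding koorn_U_def by (rule summable_sums[OF summable_rabs_cancel])
qed

lemma koorn_U_1:
  assumes "\<alpha> > -1"
  shows "koorn_U \<alpha> 1 = sin (pi * \<alpha>) / (pi * ((\<alpha> + 2) * (\<alpha> + 3)))"
proof -
  define P where "P = (\<alpha> + 2) * (\<alpha> + 3)"
  define S where "S = (\<lambda>n. \<Sum>l<n. koorn_c \<alpha> l / fact (1 + l))"
  have "P * S n = - (real n * koorn_c \<alpha> n / fact n)" for n
  proof -
    have "P * S n = (\<Sum>l<n. real 0 * koorn_c \<alpha> l / fact (0 + l)
                - (real 0 + \<alpha> + 3) * (real 0 - \<alpha> - 2) * koorn_c \<alpha> l / fact (0 + 1 + l))"
      unfolding P_def S_def sum_distrib_left
      by (intro sum.cong) (simp_all add: field_simps del: fact_Suc)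
    then show ?thesis
      unfolding koorn_c_telescope by simp
  qed
  then have "(\<lambda>n. P * S n) \<longlonglongrightarrow> sin (pi * \<alpha>) / pi"
    using tendsto_minus[OF koorn_c_asymptotics[of \<alpha>]] by simp
  moreover have "P \<noteq> 0"
    using assms by (simp add: P_def)
  ultimately have "(\<lambda>n. P * S n / P) \<longlonglongrightarrow> sin (pi * \<alpha>) / pi / P"
    by (intro tendsto_divide tendsto_const)
  then have "S \<longlonglongrightarrow> sin (pi * \<alpha>) / (pi * P)"
    using \<open>P \<noteq> 0\<close> by simp
  then have "(\<lambda>l. koorn_c \<alpha> l / fact (1 + l)) sums (sin (pi * \<alpha>) / (pi * P))"
    unfolding sums_def S_def .
  then show ?thesis
    using koorn_U_sums[of 1 \<alpha>] sums_unique2 by (simp add: P_def)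
qed

lemma koorn_U_recurrence:
  assumes "j \<ge> 1"
  shows "real j * koorn_U \<alpha> j = (real j + \<alpha> + 3) * (real j - \<alpha> - 2) * koorn_U \<alpha> (j + 1)"
proof -
  obtain K where K: "\<And>l. \<bar>koorn_c \<alpha> l\<bar> / fact l \<le> K / (real l + 1)"
    using koorn_c_bound by blast
  let ?Q = "(real j + \<alpha> + 3) * (real j - \<alpha> - 2)"
  have "(\<lambda>l. real j * koorn_c \<alpha> l / fact (j + l) - ?Q * koorn_c \<alpha> l / fact (j + 1 + l))
      sums (real j * koorn_U \<alpha> j - ?Q * koorn_U \<alpha> (j + 1))"
    using sums_diff[OF sums_mult[OF koorn_U_sums[OF assms]] sums_mult[OF koorn_U_sums[OF le_add2]]]
    by (simp only: times_divide_eq_right)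
  then have "(\<lambda>n. - real n * koorn_c \<alpha> n / fact (j + n))
      \<longlonglongrightarrow> real j * koorn_U \<alpha> j - ?Q * koorn_U \<alpha> (j + 1)"
    by (simp only: sums_def koorn_c_telescope)
  moreover have "(\<lambda>n. - real n * koorn_c \<alpha> n / fact (j + n)) \<longlonglongrightarrow> 0"
  proof (rule Lim_null_comparison)
    show "\<forall>\<^sub>F n in sequentially. norm (- real n * koorn_c \<alpha> n / fact (j + n)) \<le> K * inverse (real (Suc n))"
    proof (intro always_eventually allI)
      fix n
      have "fact (Suc n) \<le> (fact (j + n) :: real)"
        using assms by (intro fact_mono) simp
      then have "norm (- real n * koorn_c \<alpha> n / fact (j + n)) \<le> real n * \<bar>koorn_c \<alpha> n\<bar> / fact (Suc n)"
        by (simp add: abs_mult divide_left_mono del: fact_Suc)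
      also have "\<dots> = real n / (real n + 1) * (\<bar>koorn_c \<alpha> n\<bar> / fact n)"
        by (simp add: field_simps)
      also have "\<dots> \<le> 1 * (K / (real n + 1))"
        using K[of n] by (intro mult_mono) auto
      finally show "norm (- real n * koorn_c \<alpha> n / fact (j + n)) \<le> K * inverse (real (Suc n))"
        by (simp add: divide_inverse add.commute)
    qed
    show "(\<lambda>n. K * inverse (real (Suc n))) \<longlonglongrightarrow> 0"
      by (intro tendsto_mult_right_zero LIMSEQ_inverse_real_of_nat)
  qed
  ultimately show ?thesis
    using LIMSEQ_unique by fastforce
qed

text \<open>The induction step multiplies by \<open>n + 1\<close> instead of dividing by the factor \<open>n - \<alpha> - 1\<close> of the
  recurrence, which vanishes when \<alpha> is a natural number.\<close>
lemma gbinomial_mult_koorn_U: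
  assumes "\<alpha> > -1"
  shows "((\<alpha> + 1) gchoose n) * koorn_U \<alpha> (Suc n)
       = (-1) ^ n * (sin (pi * \<alpha>) / pi) / pochhammer (\<alpha> + 2) (n + 2)"
proof (induction n)
  case 0
  then show ?case
    using koorn_U_1[OF assms] by (simp add: pochhammer_Suc numeral_2_eq_2 algebra_simps)
next
  case (Suc n)
  have "real (Suc n) * ((\<alpha> + 1) gchoose Suc n) = (\<alpha> + 1 - real n) * ((\<alpha> + 1) gchoose n)"
    using gbinomial_mult_1[of "\<alpha> + 1" n] by (simp add: algebra_simps)
  then have "real (Suc n) * ((real n + \<alpha> + 4) * (((\<alpha> + 1) gchoose Suc n) * koorn_U \<alpha> (Suc (Suc n))))
      = (real n + \<alpha> + 4) * (\<alpha> + 1 - real n) * ((\<alpha> + 1) gchoose n) * koorn_U \<alpha> (Suc (Suc n))"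
    by (metis mult.assoc mult.left_commute)
  also have "\<dots> = - ((\<alpha> + 1) gchoose n) * (real (Suc n) * koorn_U \<alpha> (Suc n))"
  proof -
    have "real (Suc n) * koorn_U \<alpha> (Suc n)
        = (real (Suc n) + \<alpha> + 3) * (real (Suc n) - \<alpha> - 2) * koorn_U \<alpha> (Suc n + 1)"
      by (rule koorn_U_recurrence) simp
    then show ?thesis
      by (simp only:) (simp add: algebra_simps)
  qed
  also have "\<dots> = real (Suc n) * - (((\<alpha> + 1) gchoose n) * koorn_U \<alpha> (Suc n))"
    by simp
  finally have "(real n + \<alpha> + 4) * (((\<alpha> + 1) gchoose Suc n) * koorn_U \<alpha> (Suc (Suc n)))
      = - (((\<alpha> + 1) gchoose n) * koorn_U \<alpha> (Suc n))"
    by (simp only: mult_cancel_left of_nat_eq_0_iff) simp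
  moreover have "real n + \<alpha> + 4 \<noteq> 0"
    using assms by linarith
  ultimately have "((\<alpha> + 1) gchoose Suc n) * koorn_U \<alpha> (Suc (Suc n))
      = - (((\<alpha> + 1) gchoose n) * koorn_U \<alpha> (Suc n)) / (real n + \<alpha> + 4)"
    by (simp add: field_simps)
  moreover have "pochhammer (\<alpha> + 2) (Suc n + 2) = pochhammer (\<alpha> + 2) (n + 2) * (real n + \<alpha> + 4)"
    by (simp add: pochhammer_Suc algebra_simps)
  ultimately show ?case
    unfolding Suc.IH by (simp add: divide_divide_eq_left)
qed

lemma koorn_a_Suc_diagonal:
  "koorn_a \<alpha> (Suc i) x
     = (\<Sum>k\<le>i. - ((\<alpha> + 1) gchoose k) * x ^ (k + 1) * (koorn_c \<alpha> (i - k) / fact (k + 1 + (i - k))))"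
proof -
  have "(\<Sum>j=1..Suc i. ((\<alpha> + 1) gchoose (j - 1)) * koorn_c \<alpha> (Suc i - j) * x ^ j)
      = (\<Sum>k\<le>i. ((\<alpha> + 1) gchoose k) * koorn_c \<alpha> (i - k) * x ^ (k + 1))"
    unfolding One_nat_def sum.atLeast1_atMost_eq lessThan_Suc_atMost by simp
  moreover have "fact (k + 1 + (i - k)) = (fact (Suc i) :: real)" if "k \<le> i" for k
    using that by simp
  ultimately show ?thesis
    unfolding koorn_a_conv_koorn_c
    by (simp add: sum_divide_distrib sum_negf[symmetric] algebra_simps)
qed

lemma abs_partial_koorn_U_le:
  "\<bar>\<Sum>l<n. koorn_c \<alpha> l / fact (k + 1 + l)\<bar> \<le> (\<Sum>l. \<bar>koorn_c \<alpha> l / fact (1 + l)\<bar>) / fact k"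
proof -
  have "\<bar>\<Sum>l<n. koorn_c \<alpha> l / fact (k + 1 + l)\<bar> \<le> (\<Sum>l<n. \<bar>koorn_c \<alpha> l / fact (1 + l)\<bar> / fact k)"
  proof (rule order_trans[OF sum_abs sum_mono])
    fix l
    have "fact k * fact (1 + l) \<le> (fact (k + 1 + l) :: real)"
      using fact_mult_le_fact_add[of k "1 + l"] by (simp add: add.assoc)
    then have "\<bar>koorn_c \<alpha> l\<bar> / fact (k + 1 + l) \<le> \<bar>koorn_c \<alpha> l\<bar> / (fact k * fact (1 + l))"
      by (intro divide_left_mono) auto
    then show "\<bar>koorn_c \<alpha> l / fact (k + 1 + l)\<bar> \<le> \<bar>koorn_c \<alpha> l / fact (1 + l)\<bar> / fact k"
      by (simp add: field_simps del: fact_Suc)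
  qed
  also have "\<dots> \<le> (\<Sum>l. \<bar>koorn_c \<alpha> l / fact (1 + l)\<bar>) / fact k"
    unfolding sum_divide_distrib[symmetric] using summable_abs_koorn_U[of 1 \<alpha>]
    by (intro divide_right_mono sum_le_suminf) (simp_all del: fact_Suc)
  finally show ?thesis .
qed

lemma koorn_U_term_eq_hyp1F1_term:
  assumes "\<alpha> > -1"
  shows "- ((\<alpha> + 1) gchoose k) * x ^ (k + 1) * koorn_U \<alpha> (k + 1)
       = - (sin (pi * \<alpha>) / pi) * (x / ((\<alpha> + 2) * (\<alpha> + 3)))
           * (pochhammer 1 k / pochhammer (\<alpha> + 4) k * (- x) ^ k / fact k)"
proof -
  have "pochhammer (\<alpha> + 2) (k + 2) = (\<alpha> + 2) * (\<alpha> + 3) * pochhammer (\<alpha> + 4) k"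
    using pochhammer_product'[of "\<alpha> + 2" 2 k] by (simp add: pochhammer_Suc numeral_2_eq_2 algebra_simps)
  moreover have "(\<alpha> + 2) * (\<alpha> + 3) \<noteq> 0" "pochhammer (\<alpha> + 4) k \<noteq> 0"
    using assms pochhammer_pos[of "\<alpha> + 4" k] by auto
  ultimately show ?thesis
    using gbinomial_mult_koorn_U[OF assms, of k]
    by (simp add: pochhammer_fact[symmetric] power_minus' field_simps)
qed

lemma koorn_a_sums_hyp1F1:
  assumes "\<alpha> > -1"
  shows "(\<lambda>n. koorn_a \<alpha> (n + 1) x) sums
           (- (sin (pi * \<alpha>) / pi) * (x / ((\<alpha> + 2) * (\<alpha> + 3))) * hyp1F1 1 (\<alpha> + 4) (- x))"
proof -
  define s where "s = sin (pi * \<alpha>) / pi"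
  define P where "P = (\<alpha> + 2) * (\<alpha> + 3)"
  define G where "G k l = - ((\<alpha> + 1) gchoose k) * x ^ (k + 1) * (koorn_c \<alpha> l / fact (k + 1 + l))" for k l
  define b where "b k = - ((\<alpha> + 1) gchoose k) * x ^ (k + 1) * koorn_U \<alpha> (k + 1)" for k
  define t where "t k = pochhammer 1 k / pochhammer (\<alpha> + 4) k * (- x) ^ k / fact k" for k
  define H where "H = (\<Sum>l. \<bar>koorn_c \<alpha> l / fact (1 + l)\<bar>)"
  define M where "M k = H * \<bar>x\<bar> * ((\<bar>\<alpha> + 1\<bar> + 1) * \<bar>x\<bar>) ^ k / fact k" for k
  have "G k sums b k" for k
    unfolding G_def b_def by (intro sums_mult koorn_U_sums) simp
  moreover have "norm (\<Sum>l<n. G k l) \<le> M k" for k n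
  proof -
    have "(\<Sum>l<n. G k l)
        = - ((\<alpha> + 1) gchoose k) * x ^ (k + 1) * (\<Sum>l<n. koorn_c \<alpha> l / fact (k + 1 + l))"
      unfolding G_def by (simp only: sum_distrib_left)
    then have "norm (\<Sum>l<n. G k l)
        = \<bar>(\<alpha> + 1) gchoose k\<bar> * \<bar>x\<bar> ^ (k + 1) * \<bar>\<Sum>l<n. koorn_c \<alpha> l / fact (k + 1 + l)\<bar>"
      by (simp only: real_norm_def abs_mult abs_minus_cancel power_abs)
    also have "\<dots> \<le> (\<bar>\<alpha> + 1\<bar> + 1) ^ k * \<bar>x\<bar> ^ (k + 1) * (H / fact k)"
      unfolding H_def by (intro mult_mono abs_gbinomial_le abs_partial_koorn_U_le) auto
    also have "\<dots> = M k"
      by (simp add: M_def power_mult_distrib)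
    finally show ?thesis .
  qed
  moreover have "summable M"
    unfolding M_def using summable_mult[OF summable_exp[of "(\<bar>\<alpha> + 1\<bar> + 1) * \<bar>x\<bar>"], of "H * \<bar>x\<bar>"]
    by (simp add: divide_inverse ac_simps)
  ultimately have "(\<lambda>i. \<Sum>k\<le>i. G k (i - k)) sums (\<Sum>k. b k)"
    by (rule sums_diagonal_Tannery)
  then have lim: "(\<lambda>n. koorn_a \<alpha> (n + 1) x) sums (\<Sum>k. b k)"
    by (simp add: G_def koorn_a_Suc_diagonal del: fact_Suc)
  have b_eq: "b k = (- s * (x / P)) * t k" for k
    unfolding b_def t_def s_def P_def by (rule koorn_U_term_eq_hyp1F1_term[OF assms])
  have "t sums hyp1F1 1 (\<alpha> + 4) (- x)"
    unfolding hyp1F1_def t_def using summable_hyp1F1_one[of "\<alpha> + 4" "- x"] assms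
    by (simp add: summable_sums)
  then have "b sums (- s * (x / P) * hyp1F1 1 (\<alpha> + 4) (- x))"
    unfolding b_eq by (rule sums_mult)
  then have "(\<Sum>k. b k) = - s * (x / P) * hyp1F1 1 (\<alpha> + 4) (- x)"
    by (rule sums_unique[symmetric])
  with lim show ?thesis
    unfolding s_def P_def by simp
qed

lemma koorn_c_nat_eq_0: "m + 2 < l \<Longrightarrow> koorn_c (real m) l = 0"
  using gbinomial_of_nat_eq_0[of "m + 2" l, where 'a = real] by (simp add: koorn_c_def add.commute)

lemma koorn_c_add_div_fact:
  "koorn_c \<alpha> (n + d) / fact n
     = (-1) ^ d * pochhammer (\<alpha> + 3) d * (((\<alpha> + 2) gchoose (n + d)) * ((- \<alpha> - real d - 3) gchoose n))"
proof -
  have "pochhammer (\<alpha> + 3) (d + n) / fact n = pochhammer (\<alpha> + 3) d * ((\<alpha> + 2 + real d + real n) gchoose n)"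
    by (simp add: pochhammer_product' gbinomial_pochhammer' algebra_simps)
  also have "(\<alpha> + 2 + real d + real n) gchoose n = (-1) ^ n * ((- \<alpha> - real d - 3) gchoose n)"
    using gbinomial_minus'[of "\<alpha> + 2 + real d" n] by (simp add: algebra_simps)
  finally have "pochhammer (\<alpha> + 3) (d + n) / fact n
      = (-1) ^ n * pochhammer (\<alpha> + 3) d * ((- \<alpha> - real d - 3) gchoose n)"
    by simp
  then show ?thesis
    unfolding koorn_c_def by (simp add: power_add add.commute[of n d] field_simps)
qed

lemma sum_koorn_c_shift_nat:
  assumes "d \<le> m + 2" "m + 2 < B"
  shows "(\<Sum>n<B. koorn_c (real m) (n + d) / fact n) = (-1) ^ (m + d) * koorn_c (real m) d"
proof -
  define r where "r = m + 2 - d"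
  define a where "a = - real m - real d - 3"
  have "(\<Sum>n<B. ((real m + 2) gchoose (n + d)) * (a gchoose n))
      = (\<Sum>n=0..r. (a gchoose n) * (real (m + 2) gchoose (r - n)))"
  proof (intro sum.mono_neutral_cong_right ballI)
    show "((real m + 2) gchoose (n + d)) * (a gchoose n) = 0" if "n \<in> {..<B} - {0..r}" for n
    proof -
      have "m + 2 < n + d"
        using that by (auto simp: r_def)
      then show ?thesis
        using gbinomial_of_nat_eq_0[of "m + 2" "n + d", where 'a = real] by (simp add: add.commute)
    qed
    show "((real m + 2) gchoose (n + d)) * (a gchoose n) = (a gchoose n) * (real (m + 2) gchoose (r - n))"
      if "n \<in> {0..r}" for n
      using that assms gbinomial_of_nat_symmetric[of "n + d" "m + 2", where 'a = real]
      by (simp add: r_def add.commute)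
  qed (use assms in \<open>auto simp: r_def\<close>)
  also have "\<dots> = (a + real (m + 2)) gchoose r"
    by (rule gbinomial_Vandermonde)
  also have "\<dots> = (-1) ^ r * (real (m + 2) gchoose r)"
    using gbinomial_negated_upper[of "a + real (m + 2)" r] assms by (simp add: a_def r_def)
  also have "real (m + 2) gchoose r = (real m + 2) gchoose d"
    using gbinomial_of_nat_symmetric[of d "m + 2", where 'a = real] assms by (simp add: r_def add.commute)
  finally have vandermonde: "(\<Sum>n<B. ((real m + 2) gchoose (n + d)) * (a gchoose n))
      = (-1) ^ r * ((real m + 2) gchoose d)" .
  have "(-1 :: real) ^ (d + r) = (-1) ^ (m + d + d)"
    using assms by (simp add: r_def power_add)
  then show ?thesis
    unfolding koorn_c_add_div_fact sum_distrib_left[symmetric] a_def[symmetric] vandermonde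
    by (simp add: koorn_c_def power_add algebra_simps)
qed

definition koorn_coeff :: "real \<Rightarrow> nat \<Rightarrow> nat \<Rightarrow> real" where
  "koorn_coeff \<alpha> i q = (if q < i then koorn_c \<alpha> (i - Suc q) else 0)"

lemma koorn_a_nat_eq:
  "koorn_a (real m) i x
     = - (\<Sum>q<m + 2. ((real m + 1) gchoose q) * koorn_coeff (real m) i q * x ^ (q + 1)) / fact i"
proof -
  let ?f = "\<lambda>q. ((real m + 1) gchoose q) * koorn_coeff (real m) i q * x ^ (q + 1)"
  have "(\<Sum>j=1..i. ((real m + 1) gchoose (j - 1)) * koorn_c (real m) (i - j) * x ^ j) = (\<Sum>q<i. ?f q)"
    unfolding One_nat_def sum.atLeast1_atMost_eq by (intro sum.cong) (auto simp: koorn_coeff_def)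
  also have "\<dots> = (\<Sum>q<i + (m + 2). ?f q)"
    by (rule sum.mono_neutral_left) (auto simp: koorn_coeff_def)
  also have "\<dots> = (\<Sum>q<m + 2. ?f q)"
  proof (rule sum.mono_neutral_right)
    show "\<forall>q\<in>{..<i + (m + 2)} - {..<m + 2}. ?f q = 0"
      using gbinomial_of_nat_eq_0[of "m + 1", where 'a = real] by (auto simp: add.commute)
  qed auto
  finally show ?thesis
    unfolding koorn_a_conv_koorn_c by simp
qed

lemma koorn_a_nat_eq_0:
  assumes "2 * m + 5 \<le> i"
  shows "koorn_a (real m) i x = 0"
proof -
  have "koorn_coeff (real m) i q = 0" if "q < m + 2" for q
    using that assms by (auto simp: koorn_coeff_def intro!: koorn_c_nat_eq_0)
  then show ?thesis
    unfolding koorn_a_nat_eq by simp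
qed

lemma koorn_U_nat_eq_0:
  assumes "1 \<le> e" "e \<le> m + 2"
  shows "koorn_U (real m) e = 0"
proof -
  have "((real m + 1) gchoose (e - 1)) * koorn_U (real m) (Suc (e - 1)) = 0"
    using gbinomial_mult_koorn_U[of "real m" "e - 1"] by simp
  moreover have "(real m + 1) gchoose (e - 1) = real ((m + 1) choose (e - 1))"
    by (simp add: binomial_gbinomial add.commute)
  moreover have "(m + 1) choose (e - 1) \<noteq> 0"
    using assms by simp
  ultimately show ?thesis
    using assms by simp
qed

lemma sum_koorn_coeff_nat:
  assumes "q < m + 2" "2 * m + 5 \<le> B"
  shows "(\<Sum>n<B. koorn_coeff (real m) (n + k) q / fact n) = (-1) ^ (m + k + q + 1) * koorn_coeff (real m) k q"
proof (cases "q < k")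
  case True
  define d where "d = k - Suc q"
  have coeff: "koorn_coeff (real m) (n + k) q = koorn_c (real m) (n + d)" for n
    using True by (simp add: koorn_coeff_def d_def)
  have "m + k + q + 1 = (m + d) + 2 * (q + 1)"
    using True by (simp add: d_def)
  then have "(-1 :: real) ^ (m + k + q + 1) = (-1) ^ (m + d)"
    by (simp only: power_add power_mult) simp
  moreover have "(\<Sum>n<B. koorn_c (real m) (n + d) / fact n) = (-1) ^ (m + d) * koorn_c (real m) d"
  proof (cases "d \<le> m + 2")
    case True
    then show ?thesis
      using assms by (intro sum_koorn_c_shift_nat) auto
  qed (simp add: koorn_c_nat_eq_0)
  ultimately show ?thesis
    using coeff[of 0] by (simp add: coeff)
next
  case False
  define e where "e = Suc q - k"
  define f where "f n = koorn_coeff (real m) (n + k) q / fact n" for n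
  have f_shift: "f (l + e) = koorn_c (real m) l / fact (e + l)" for l
    using False by (auto simp: f_def e_def koorn_coeff_def add.commute)
  have f_0: "f n = 0" if "n < e" for n
    using False that by (auto simp: f_def e_def koorn_coeff_def)
  have "1 \<le> e" "e \<le> m + 2"
    using False assms by (auto simp: e_def)
  then have "(\<lambda>l. f (l + e)) sums 0"
    using koorn_U_sums[of e "real m"] by (simp add: f_shift koorn_U_nat_eq_0)
  then have "f sums 0"
    using f_0 sums_zero_iff_shift by blast
  moreover have "f sums (\<Sum>n<B. f n)"
  proof (rule sums_finite)
    show "f n = 0" if "n \<notin> {..<B}" for n
      using that assms False by (auto simp: f_def e_def koorn_coeff_def intro!: koorn_c_nat_eq_0)
  qed simp
  ultimately show ?thesis
    using False sums_unique2 by (fastforce simp: f_def koorn_coeff_def)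
qed

lemma koorn_a_nat_binomial_sums:
  "(\<lambda>n. real ((n + k) choose k) * koorn_a (real m) (n + k) x) sums ((-1) ^ (m + k) * koorn_a (real m) k (- x))"
proof -
  define B where "B = 2 * m + 5"
  define C where "C q = ((real m + 1) gchoose q) * x ^ (q + 1) / fact k" for q
  let ?f = "\<lambda>n. real ((n + k) choose k) * koorn_a (real m) (n + k) x"
  have f_eq: "?f n = - (\<Sum>q<m + 2. C q * (koorn_coeff (real m) (n + k) q / fact n))" for n
  proof -
    have "real ((n + k) choose k) = fact (n + k) / (fact k * fact n)"
      by (simp add: binomial_fact)
    then have "?f n = - ((\<Sum>q<m + 2. ((real m + 1) gchoose q) * koorn_coeff (real m) (n + k) q * x ^ (q + 1))
        / (fact k * fact n))"
      unfolding koorn_a_nat_eq by (simp add: field_simps del: sum.lessThan_Suc)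
    also have "\<dots> = - (\<Sum>q<m + 2. C q * (koorn_coeff (real m) (n + k) q / fact n))"
      unfolding sum_divide_distrib C_def by (simp add: field_simps)
    finally show ?thesis .
  qed
  have "(\<Sum>n<B. ?f n) = - (\<Sum>q<m + 2. C q * (\<Sum>n<B. koorn_coeff (real m) (n + k) q / fact n))"
    by (simp only: f_eq sum_negf sum.swap[of _ "{..<B}"] sum_distrib_left)
  also have "\<dots> = (-1) ^ (m + k) * koorn_a (real m) k (- x)"
    unfolding koorn_a_nat_eq C_def
    by (simp add: B_def sum_koorn_coeff_nat sum_distrib_left sum_divide_distrib power_add power_minus[of x]
        algebra_simps del: sum.lessThan_Suc)
  finally show ?thesis
    using sums_finite[of "{..<B}" ?f] koorn_a_nat_eq_0[of m] by (simp add: B_def)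
qed

theorem mainTheorem1:
  fixes \<alpha> :: real
  assumes "\<alpha> > -1"
  shows "(\<forall>x::real. (\<lambda>n. koorn_a \<alpha> (n + 1) x) sums
            (- (sin (pi * \<alpha>) / pi) * (x / ((\<alpha> + 2) * (\<alpha> + 3))) * hyp1F1 1 (\<alpha> + 4) (- x))) \<and>
         (\<forall>m::nat. \<alpha> = real m \<longrightarrow>
           (\<forall>x::real. \<forall>k::nat. k \<ge> 1 \<longrightarrow>
              (\<lambda>n. real ((n + k) choose k) * koorn_a \<alpha> (n + k) x) sums
                ((-1) ^ (m + k) * koorn_a \<alpha> k (- x)))) \<and>
         (\<forall>m::nat. \<alpha> = real m \<longrightarrow>
           (\<forall>x::real. (\<lambda>n. koorn_a \<alpha> (n + 1) x) sums 0
                   \<and> (\<lambda>n. real (n + 1) * koorn_a \<alpha> (n + 1) x) sums ((-1) ^ (m + 1) * x)))"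
proof (intro conjI allI impI)
  fix x
  show "(\<lambda>n. koorn_a \<alpha> (n + 1) x) sums
      (- (sin (pi * \<alpha>) / pi) * (x / ((\<alpha> + 2) * (\<alpha> + 3))) * hyp1F1 1 (\<alpha> + 4) (- x))"
    using assms by (rule koorn_a_sums_hyp1F1)
next
  fix m x k
  assume "\<alpha> = real m"
  then show "(\<lambda>n. real ((n + k) choose k) * koorn_a \<alpha> (n + k) x) sums ((-1) ^ (m + k) * koorn_a \<alpha> k (- x))"
    by (simp add: koorn_a_nat_binomial_sums)
next
  fix m x
  assume "\<alpha> = real m"
  then show "(\<lambda>n. koorn_a \<alpha> (n + 1) x) sums 0"
    using koorn_a_sums_hyp1F1[OF assms, of x] by simp
next
  fix m x
  assume "\<alpha> = real m"
  then show "(\<lambda>n. real (n + 1) * koorn_a \<alpha> (n + 1) x) sums ((-1) ^ (m + 1) * x)"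
    using koorn_a_nat_binomial_sums[of 1 m x] by (simp add: koorn_a_def)
qed

end
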